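(* Let $E$ be an $\mathbb{R}$-group, $X$ a locally compact (Hausdorff) space not reduced to one point, and $\mathcal{H}=(H_\varepsilon)_{\varepsilon\in E}$ a continuous absorptive action of $E$ on $X$ with center $\omega$. Then $\omega$ has a countable neighbourhood base consisting of compact elementary sets, and also a countable neighbourhood base consisting of open elementary sets.
   Context: An $\mathbb{R}$-group is an abelian group $E$ (operation written multiplicatively) whose underlying set is a subset of $\mathbb{R}$ containing all positive integers, such that: (RG1) with the natural order of $\mathbb{R}$, $E$ is a totally ordered group; (RG2) with the topology induced from $\mathbb{R}$, $E$ is a locally compact group; (RG3) there is a nonconstant continuous homomorphism $h:E\to\mathbb{R}_+^*$ such that for every $\alpha\in E$ the set $\{\varepsilon\in E:\varepsilon\ge\alpha\}$ is integrable for $h\cdot m$, $m$ a Haar measure on $E$. $e$ is the identity of $E$, $\varepsilon^{-1}$ the group inverse; inequalities refer to the order of $\mathbb{R}$. An action of $E$ on $X$ is a family $(H_\varepsilon)_{\varepsilon\in E}$ of bijections of $X$ with $H_\varepsilon\circ H_{\varepsilon'}=H_{\varepsilon\varepsilon'}$, $H_e=\mathrm{id}_X$; continuous if $(\varepsilon,x)\mapsto H_\varepsilon(x)$ is continuous on $E\times X$; absorptive if some $\omega\in X$ satisfies (ABS): for every neighbourhood $V$ of $\omega$ and every $x\in X$ there are a neighbourhood $U$ of $x$ and $\alpha\in E$ with $H_{\varepsilon^{-1}}(U)\subset V$ for all $\varepsilon\le\alpha$; this $\omega$ is unique and called the center. A set $T\subset X$ is balanced if $H_{\varepsilon^{-1}}(T)\subset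 T$ for all $\varepsilon\le e$; it is elementary if it is a balanced relatively compact neighbourhood of $\omega$. *)

theory Defs
  imports "HOL-Analysis.Analysis"
begin

definition abelian_group_on :: "real set \<Rightarrow> (real \<Rightarrow> real \<Rightarrow> real) \<Rightarrow> real \<Rightarrow> (real \<Rightarrow> real) \<Rightarrow> bool" where
  "abelian_group_on E mul e ginv \<longleftrightarrow>
     (\<forall>a\<in>E. \<forall>b\<in>E. mul a b \<in> E) \<and>
     (\<forall>a\<in>E. \<forall>b\<in>E. \<forall>c\<in>E. mul (mul a b) c = mul a (mul b c)) \<and>
     (\<forall>a\<in>E. \<forall>b\<in>E. mul a b = mul b a) \<and>
     e \<in> E \<and> (\<forall>a\<in>E. mul e a = a) \<and>
     (\<forall>a\<in>E. ginv a \<in> E \<and> mul (ginv a) a = e)"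

text \<open>Haar measure on E (subspace topology of the reals): a nonzero left-invariant Borel
  measure, finite on compact sets and positive on nonempty open sets (for second-countable
  locally compact groups such as subgroups of the reals this is exactly a Haar measure).\<close>
definition haar_measure_on :: "real set \<Rightarrow> (real \<Rightarrow> real \<Rightarrow> real) \<Rightarrow> real measure \<Rightarrow> bool" where
  "haar_measure_on E mul m \<longleftrightarrow>
     space m = E \<and> sets m = sets (restrict_space borel E) \<and>
     (\<forall>a\<in>E. \<forall>A\<in>sets m. emeasure m ((\<lambda>x. mul a x) ` A) = emeasure m A) \<and>
     (\<forall>K. compact K \<and> K \<subseteq> E \<longrightarrow> emeasure m K < \<infinity>) \<and>
     (\<forall>U. openin (top_of_set E) U \<and> U \<noteq> {} \<longrightarrow> emeasure m U > 0)"

definition R_group :: "real set \<Rightarrow> (real \<Rightarrow> real \<Rightarrow> real) \<Rightarrow> real \<Rightarrow> (real \<Rightarrow> real) \<Rightarrow> bool" where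
  "R_group E mul e ginv \<longleftrightarrow>
     abelian_group_on E mul e ginv \<and>
     (\<forall>n::nat. n \<ge> 1 \<longrightarrow> real n \<in> E) \<and>
     \<comment> \<open>(RG1) totally ordered group for the natural order of the reals\<close>
     (\<forall>a\<in>E. \<forall>b\<in>E. \<forall>c\<in>E. a \<le> b \<longrightarrow> mul a c \<le> mul b c) \<and>
     \<comment> \<open>(RG2) locally compact topological group for the induced topology\<close>
     continuous_on (E \<times> E) (\<lambda>(a, b). mul a b) \<and> continuous_on E ginv \<and>
     locally compact E \<and>
     \<comment> \<open>(RG3)\<close>
     (\<exists>h m. haar_measure_on E mul m \<and>
        (\<forall>a\<in>E. h a > 0) \<and> (\<forall>a\<in>E. \<forall>b\<in>E. h (mul a b) = h a * h b) \<and>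
        continuous_on E h \<and> (\<exists>a\<in>E. \<exists>b\<in>E. h a \<noteq> h b) \<and>
        (\<forall>\<alpha>\<in>E. emeasure (density m (\<lambda>x. ennreal (h x))) {\<epsilon>\<in>E. \<epsilon> \<ge> \<alpha>} < \<infinity>))"

definition nbhd :: "'a topology \<Rightarrow> 'a \<Rightarrow> 'a set \<Rightarrow> bool" where
  "nbhd X x U \<longleftrightarrow> U \<subseteq> topspace X \<and> (\<exists>W. openin X W \<and> x \<in> W \<and> W \<subseteq> U)"

definition group_action :: "real set \<Rightarrow> (real \<Rightarrow> real \<Rightarrow> real) \<Rightarrow> real \<Rightarrow> 'a topology \<Rightarrow> (real \<Rightarrow> 'a \<Rightarrow> 'a) \<Rightarrow> bool" where
  "group_action E mul e X H \<longleftrightarrow>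
     (\<forall>\<epsilon>\<in>E. bij_betw (H \<epsilon>) (topspace X) (topspace X)) \<and>
     (\<forall>\<epsilon>\<in>E. \<forall>\<epsilon>'\<in>E. \<forall>x\<in>topspace X. H \<epsilon> (H \<epsilon>' x) = H (mul \<epsilon> \<epsilon>') x) \<and>
     (\<forall>x\<in>topspace X. H e x = x)"

definition continuous_action :: "real set \<Rightarrow> 'a topology \<Rightarrow> (real \<Rightarrow> 'a \<Rightarrow> 'a) \<Rightarrow> bool" where
  "continuous_action E X H \<longleftrightarrow>
     continuous_map (prod_topology (top_of_set E) X) X (\<lambda>(\<epsilon>, x). H \<epsilon> x)"

definition absorptive_center :: "real set \<Rightarrow> (real \<Rightarrow> real) \<Rightarrow> 'a topology \<Rightarrow> (real \<Rightarrow> 'a \<Rightarrow> 'a) \<Rightarrow> 'a \<Rightarrow> bool" where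
  "absorptive_center E ginv X H \<omega> \<longleftrightarrow> \<omega> \<in> topspace X \<and>
     (\<forall>V. nbhd X \<omega> V \<longrightarrow> (\<forall>x\<in>topspace X. \<exists>U \<alpha>. nbhd X x U \<and> \<alpha> \<in> E \<and>
         (\<forall>\<epsilon>\<in>E. \<epsilon> \<le> \<alpha> \<longrightarrow> H (ginv \<epsilon>) ` U \<subseteq> V)))"

definition balanced :: "real set \<Rightarrow> real \<Rightarrow> (real \<Rightarrow> real) \<Rightarrow> 'a topology \<Rightarrow> (real \<Rightarrow> 'a \<Rightarrow> 'a) \<Rightarrow> 'a set \<Rightarrow> bool" where
  "balanced E e ginv X H T \<longleftrightarrow> T \<subseteq> topspace X \<and>
     (\<forall>\<epsilon>\<in>E. \<epsilon> \<le> e \<longrightarrow> H (ginv \<epsilon>) ` T \<subseteq> T)"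

definition elementary :: "real set \<Rightarrow> real \<Rightarrow> (real \<Rightarrow> real) \<Rightarrow> 'a topology \<Rightarrow> (real \<Rightarrow> 'a \<Rightarrow> 'a) \<Rightarrow> 'a \<Rightarrow> 'a set \<Rightarrow> bool" where
  "elementary E e ginv X H \<omega> T \<longleftrightarrow> balanced E e ginv X H T \<and>
     compactin X (X closure_of T) \<and> nbhd X \<omega> T"

end

theory Submission
  imports Defs
begin

text \<open>
  The center \<open>\<omega>\<close> is fixed by every \<open>H\<^sub>\<epsilon>\<close> (a consequence of
  (ABS), the Hausdorff property and the order of \<open>E\<close>). Using local compactness, sweeping a
  small open neighbourhood \<open>W\<close> of \<open>\<omega>\<close>, i.e. forming the union of all \<open>H (ginv \<epsilon>) ` W\<close>
  with \<open>\<epsilon> \<le> \<alpha>\<close>, produces an open elementary set \<open>T\<close>; its closure \<open>K\<close> is a compact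
  elementary set. By compactness, (ABS)
  holds uniformly on \<open>K\<close>: for every neighbourhood \<open>V\<close> of \<open>\<omega>\<close> some positive integer \<open>n \<in> E\<close>
  satisfies \<open>H\<^sub>n(K) \<subseteq> V\<close>. Since each \<open>H\<^sub>n\<close> is a homeomorphism fixing \<open>\<omega>\<close> and commuting with
  the action, the sets \<open>H\<^sub>n(K)\<close> resp. \<open>H\<^sub>n(T)\<close>, \<open>n \<ge> 1\<close>, are the required countable
  neighbourhood bases of compact resp. open elementary sets.
\<close>

section \<open>Group-theoretic preliminaries\<close>

locale real_abelian_group =
  fixes E :: "real set" and mul :: "real \<Rightarrow> real \<Rightarrow> real" and e :: real and ginv :: "real \<Rightarrow> real"
  assumes abelian_group: "abelian_group_on E mul e ginv"
begin

lemma mul_closed [simp]: "a \<in> E \<Longrightarrow> b \<in> E \<Longrightarrow> mul a b \<in> E"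
  and mul_assoc: "a \<in> E \<Longrightarrow> b \<in> E \<Longrightarrow> c \<in> E \<Longrightarrow> mul (mul a b) c = mul a (mul b c)"
  and mul_comm: "a \<in> E \<Longrightarrow> b \<in> E \<Longrightarrow> mul a b = mul b a"
  and unit_closed [simp]: "e \<in> E"
  and left_unit [simp]: "a \<in> E \<Longrightarrow> mul e a = a"
  and inv_closed [simp]: "a \<in> E \<Longrightarrow> ginv a \<in> E"
  and left_inv [simp]: "a \<in> E \<Longrightarrow> mul (ginv a) a = e"
  using abelian_group unfolding abelian_group_on_def by auto

lemma right_unit [simp]: "a \<in> E \<Longrightarrow> mul a e = a"
  using mul_comm[of a e] by simp

lemma right_inv [simp]: "a \<in> E \<Longrightarrow> mul a (ginv a) = e"
  using mul_comm[of a "ginv a"] by simp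

lemma inv_unique:
  assumes "a \<in> E" "b \<in> E" "mul a b = e"
  shows "a = ginv b"
proof -
  have "a = mul a (mul b (ginv b))" using assms by simp
  also have "\<dots> = mul (mul a b) (ginv b)" using assms(1,2) by (simp add: mul_assoc)
  also have "\<dots> = ginv b" using assms by simp
  finally show ?thesis .
qed

lemma inv_inv [simp]: "a \<in> E \<Longrightarrow> ginv (ginv a) = a"
  using inv_unique[of a "ginv a"] by (simp add: eq_commute)

lemma inv_mul:
  assumes "a \<in> E" "b \<in> E"
  shows "ginv (mul a b) = mul (ginv a) (ginv b)"
proof -
  have "mul (mul (ginv a) (ginv b)) (mul a b) = mul (mul (ginv a) a) (mul (ginv b) b)"
    using assms by (metis mul_assoc mul_comm mul_closed inv_closed)
  then show ?thesis using assms by (intro inv_unique[symmetric]) auto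
qed

end

locale ordered_real_group = real_abelian_group +
  assumes translation_mono: "a \<in> E \<Longrightarrow> b \<in> E \<Longrightarrow> c \<in> E \<Longrightarrow> a \<le> b \<Longrightarrow> mul a c \<le> mul b c"
begin

lemma mul_le_of_le_unit: "a \<in> E \<Longrightarrow> b \<in> E \<Longrightarrow> a \<le> e \<Longrightarrow> mul a b \<le> b"
  using translation_mono[of a e b] by auto

lemma mul_inv_le:
  assumes "a \<in> E" "b \<in> E" "c \<in> E" "a \<le> mul b c"
  shows "mul a (ginv c) \<le> b"
  using translation_mono[OF assms(1) _ _ assms(4), of "ginv c"] assms
  by (auto simp: mul_assoc)

lemma inv_antitone:
  assumes "a \<in> E" "b \<in> E" "a \<le> b"
  shows "ginv b \<le> ginv a"
proof -
  have "mul a (mul (ginv a) (ginv b)) \<le> mul b (mul (ginv a) (ginv b))"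
    using assms by (intro translation_mono) auto
  moreover have "mul a (mul (ginv a) (ginv b)) = ginv b"
    using assms by (simp add: mul_assoc[symmetric])
  moreover have "mul b (mul (ginv a) (ginv b)) = ginv a"
    using assms by (simp add: mul_comm[of "ginv a"] mul_assoc[symmetric])
  ultimately show ?thesis by simp
qed

end

section \<open>Eventual absorption\<close>

definition eventually_absorbed ::
    "real set \<Rightarrow> (real \<Rightarrow> real) \<Rightarrow> (real \<Rightarrow> 'a \<Rightarrow> 'a) \<Rightarrow> 'a set \<Rightarrow> 'a set \<Rightarrow> bool" where
  "eventually_absorbed E ginv H W V \<longleftrightarrow> (\<exists>\<beta>\<in>E. \<forall>\<epsilon>\<in>E. \<epsilon> \<le> \<beta> \<longrightarrow> H (ginv \<epsilon>) ` W \<subseteq> V)"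

lemma absorptive_centerD:
  assumes "absorptive_center E ginv X H \<omega>" "nbhd X \<omega> V" "x \<in> topspace X"
  obtains U where "nbhd X x U" "eventually_absorbed E ginv H U V"
  using assms unfolding absorptive_center_def eventually_absorbed_def by blast

lemma eventually_absorbed_empty: "E \<noteq> {} \<Longrightarrow> eventually_absorbed E ginv H {} V"
  unfolding eventually_absorbed_def by auto

lemma eventually_absorbed_Un:
  assumes "eventually_absorbed E ginv H A V" "eventually_absorbed E ginv H B V"
  shows "eventually_absorbed E ginv H (A \<union> B) V"
proof -
  obtain \<beta>\<^sub>A \<beta>\<^sub>B where "\<beta>\<^sub>A \<in> E" "\<beta>\<^sub>B \<in> E"
    and "\<forall>\<epsilon>\<in>E. \<epsilon> \<le> \<beta>\<^sub>A \<longrightarrow> H (ginv \<epsilon>) ` A \<subseteq> V" "\<forall>\<epsilon>\<in>E. \<epsilon> \<le> \<beta>\<^sub>B \<longrightarrow> H (ginv \<epsilon>) ` B \<subseteq> V"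
    using assms unfolding eventually_absorbed_def by blast
  moreover have "min \<beta>\<^sub>A \<beta>\<^sub>B \<in> E" using \<open>\<beta>\<^sub>A \<in> E\<close> \<open>\<beta>\<^sub>B \<in> E\<close> by (simp add: min_def)
  ultimately show ?thesis
    unfolding eventually_absorbed_def image_Un by (intro bexI[of _ "min \<beta>\<^sub>A \<beta>\<^sub>B"]) auto
qed

lemma eventually_absorbed_Union:
  assumes "finite \<F>" "E \<noteq> {}" "\<And>W. W \<in> \<F> \<Longrightarrow> eventually_absorbed E ginv H W V"
  shows "eventually_absorbed E ginv H (\<Union>\<F>) V"
  using assms by (induction \<F> rule: finite_induct)
    (auto intro: eventually_absorbed_empty eventually_absorbed_Un)

lemma eventually_absorbed_subset:
  "eventually_absorbed E ginv H A V \<Longrightarrow> B \<subseteq> A \<Longrightarrow> eventually_absorbed E ginv H B V"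
  unfolding eventually_absorbed_def by blast

text \<open>Compactness turns the pointwise condition (ABS) into a uniform one: every compact set
  is eventually absorbed into every neighbourhood of the center.\<close>

lemma compact_eventually_absorbed:
  assumes center: "absorptive_center E ginv X H \<omega>" and "E \<noteq> {}"
    and K: "compactin X K" and V: "nbhd X \<omega> V"
  shows "eventually_absorbed E ginv H K V"
proof -
  define \<U> where "\<U> = {W. openin X W \<and> eventually_absorbed E ginv H W V}"
  have "K \<subseteq> \<Union>\<U>"
  proof
    fix x assume "x \<in> K"
    then have "x \<in> topspace X" using compactin_subset_topspace[OF K] by blast
    then obtain U where U: "nbhd X x U" "eventually_absorbed E ginv H U V"
      using absorptive_centerD[OF center V] by blast
    then obtain W where "openin X W" "x \<in> W" "W \<subseteq> U" unfolding nbhd_def by blast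
    with U(2) show "x \<in> \<Union>\<U>" unfolding \<U>_def by (blast intro: eventually_absorbed_subset)
  qed
  moreover have "\<And>W. W \<in> \<U> \<Longrightarrow> openin X W" unfolding \<U>_def by blast
  ultimately obtain \<F> where \<F>: "finite \<F>" "\<F> \<subseteq> \<U>" "K \<subseteq> \<Union>\<F>"
    using compactinD[OF K] by metis
  then have "eventually_absorbed E ginv H (\<Union>\<F>) V"
    using \<open>E \<noteq> {}\<close> unfolding \<U>_def by (intro eventually_absorbed_Union) auto
  then show ?thesis using \<F>(3) by (rule eventually_absorbed_subset)
qed

section \<open>Continuous absorptive actions\<close>

locale absorptive_action = ordered_real_group +
  fixes X :: "'a topology" and H :: "real \<Rightarrow> 'a \<Rightarrow> 'a" and \<omega> :: 'a
  assumes action: "group_action E mul e X H"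
    and continuous: "continuous_action E X H"
    and center: "absorptive_center E ginv X H \<omega>"
    and Hausdorff: "Hausdorff_space X"
begin

lemma H_in [simp]: "a \<in> E \<Longrightarrow> x \<in> topspace X \<Longrightarrow> H a x \<in> topspace X"
  using action bij_betwE unfolding group_action_def by blast

lemma H_image_subset: "a \<in> E \<Longrightarrow> S \<subseteq> topspace X \<Longrightarrow> H a ` S \<subseteq> topspace X"
  by auto

lemma H_mul: "a \<in> E \<Longrightarrow> b \<in> E \<Longrightarrow> x \<in> topspace X \<Longrightarrow> H a (H b x) = H (mul a b) x"
  using action unfolding group_action_def by blast

lemma H_unit [simp]: "x \<in> topspace X \<Longrightarrow> H e x = x"
  using action unfolding group_action_def by blast

lemma H_comm: "a \<in> E \<Longrightarrow> b \<in> E \<Longrightarrow> x \<in> topspace X \<Longrightarrow> H a (H b x) = H b (H a x)"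
  by (simp add: H_mul mul_comm)

lemma center_in_space [simp]: "\<omega> \<in> topspace X"
  using center unfolding absorptive_center_def by blast

lemma H_continuous:
  assumes "a \<in> E"
  shows "continuous_map X X (H a)"
proof -
  have "continuous_map X (prod_topology (top_of_set E) X) (\<lambda>x. (a, x))"
    using assms by (intro continuous_map_pairedI) auto
  from continuous_map_compose[OF this continuous[unfolded continuous_action_def]]
  show ?thesis by (simp add: o_def)
qed

lemma H_homeomorphic: "a \<in> E \<Longrightarrow> homeomorphic_map X X (H a)"
  by (rule homeomorphic_maps_imp_map[of _ _ _ "H (ginv a)"])
    (simp add: homeomorphic_maps_def H_continuous H_mul)

lemma H_openin: "a \<in> E \<Longrightarrow> openin X W \<Longrightarrow> openin X (H a ` W)"
  using homeomorphic_map_openness[OF H_homeomorphic openin_subset] by blast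

text \<open>If \<open>H a \<omega> \<noteq> \<omega>\<close>, separate the two points by
  disjoint open sets \<open>V \<ni> \<omega>\<close> and \<open>V' \<ni> H a \<omega>\<close>; by (ABS) at \<omega> the points \<open>H (ginv \<epsilon>) \<omega>\<close>
  lie in \<open>V \<inter> (H a)\<^sup>-\<^sup>1 V'\<close> for all small \<open>\<epsilon>\<close>. For \<open>\<epsilon>\<close> small enough, \<open>\<epsilon> a\<^sup>-\<^sup>1\<close> is small
  too, and \<open>H a (H (ginv \<epsilon>) \<omega>) = H (ginv (\<epsilon> a\<^sup>-\<^sup>1)) \<omega>\<close> lies in both \<open>V\<close> and \<open>V'\<close>.\<close>

lemma center_fixed [simp]:
  assumes a: "a \<in> E"
  shows "H a \<omega> = \<omega>"
proof (rule ccontr)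
  assume "H a \<omega> \<noteq> \<omega>"
  then obtain V V' where V: "openin X V" "openin X V'" "\<omega> \<in> V" "H a \<omega> \<in> V'" "disjnt V V'"
    using Hausdorff H_in[OF a center_in_space] center_in_space
    unfolding Hausdorff_space_def by metis
  define W where "W = V \<inter> {x \<in> topspace X. H a x \<in> V'}"
  have "openin X W"
    unfolding W_def using V openin_continuous_map_preimage[OF H_continuous[OF a]] by blast
  then have "nbhd X \<omega> W"
    unfolding nbhd_def W_def using V by auto
  then obtain U where U: "nbhd X \<omega> U" "eventually_absorbed E ginv H U W"
    using absorptive_centerD[OF center _ center_in_space] by blast
  then obtain \<alpha> where \<alpha>: "\<alpha> \<in> E" "\<forall>\<epsilon>\<in>E. \<epsilon> \<le> \<alpha> \<longrightarrow> H (ginv \<epsilon>) ` U \<subseteq> W"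
    unfolding eventually_absorbed_def by blast
  have "\<omega> \<in> U" using U(1) unfolding nbhd_def by blast
  define \<epsilon> where "\<epsilon> = min \<alpha> (mul \<alpha> a)"
  have \<epsilon>: "\<epsilon> \<in> E" "\<epsilon> \<le> \<alpha>" "\<epsilon> \<le> mul \<alpha> a"
    unfolding \<epsilon>_def using \<alpha>(1) a by (auto simp: min_def)
  have "H (ginv \<epsilon>) \<omega> \<in> W" using \<alpha>(2) \<epsilon> \<open>\<omega> \<in> U\<close> by blast
  then have in_V': "H a (H (ginv \<epsilon>) \<omega>) \<in> V'" unfolding W_def by blast
  have "ginv (mul \<epsilon> (ginv a)) = mul a (ginv \<epsilon>)"
    using a \<epsilon>(1) by (simp add: inv_mul mul_comm[of "ginv \<epsilon>" a])
  then have "H a (H (ginv \<epsilon>) \<omega>) = H (ginv (mul \<epsilon> (ginv a))) \<omega>"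
    using a \<epsilon>(1) by (simp add: H_mul)
  also have "\<dots> \<in> W"
  proof -
    have "mul \<epsilon> (ginv a) \<in> E" "mul \<epsilon> (ginv a) \<le> \<alpha>"
      using a \<epsilon>(1) mul_inv_le[OF \<epsilon>(1) \<alpha>(1) a \<epsilon>(3)] by simp_all
    then show ?thesis using \<alpha>(2) \<open>\<omega> \<in> U\<close> by blast
  qed
  finally have "H a (H (ginv \<epsilon>) \<omega>) \<in> V" unfolding W_def by blast
  with in_V' V(5) show False by (meson disjnt_iff)
qed

text \<open>Since the action is abelian, each \<open>H c\<close> maps balanced sets to balanced sets.\<close>

lemma balanced_image:
  assumes c: "c \<in> E" and S: "balanced E e ginv X H S"
  shows "balanced E e ginv X H (H c ` S)"
  unfolding balanced_def
proof (intro conjI ballI impI)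
  have S_space: "S \<subseteq> topspace X" using S unfolding balanced_def by blast
  then show "H c ` S \<subseteq> topspace X" using c by (rule H_image_subset[rotated])
  fix \<delta> assume \<delta>: "\<delta> \<in> E" "\<delta> \<le> e"
  have "H (ginv \<delta>) ` H c ` S = H c ` H (ginv \<delta>) ` S"
    unfolding image_image using S_space c \<delta>(1) by (intro image_cong) (auto simp: H_comm)
  also have "\<dots> \<subseteq> H c ` S" using S \<delta> unfolding balanced_def by blast
  finally show "H (ginv \<delta>) ` H c ` S \<subseteq> H c ` S" .
qed

lemma balanced_closure:
  assumes S: "balanced E e ginv X H S"
  shows "balanced E e ginv X H (X closure_of S)"
  unfolding balanced_def
proof (intro conjI ballI impI)
  show "X closure_of S \<subseteq> topspace X" by (rule closure_of_subset_topspace)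
  fix \<delta> assume \<delta>: "\<delta> \<in> E" "\<delta> \<le> e"
  have "H (ginv \<delta>) ` (X closure_of S) \<subseteq> X closure_of (H (ginv \<delta>) ` S)"
    using \<delta>(1) by (intro continuous_map_image_closure_subset H_continuous) simp
  also have "\<dots> \<subseteq> X closure_of S"
    using S \<delta> unfolding balanced_def by (intro closure_of_mono) blast
  finally show "H (ginv \<delta>) ` (X closure_of S) \<subseteq> X closure_of S" .
qed

text \<open>Images of elementary sets under the action are elementary: \<open>H c\<close> is a homeomorphism
  fixing the center.\<close>

lemma elementary_image:
  assumes c: "c \<in> E" and T: "elementary E e ginv X H \<omega> T"
  shows "elementary E e ginv X H \<omega> (H c ` T)"
  unfolding elementary_def
proof (intro conjI)
  have T_space: "T \<subseteq> topspace X" using T unfolding elementary_def balanced_def by blast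
  show "balanced E e ginv X H (H c ` T)"
    using T c balanced_image unfolding elementary_def by blast
  have "X closure_of (H c ` T) = H c ` (X closure_of T)"
    using homeomorphic_map_closure_of[OF H_homeomorphic[OF c] T_space] .
  then show "compactin X (X closure_of (H c ` T))"
    using T c image_compactin[OF _ H_continuous] unfolding elementary_def by auto
  obtain W where W: "openin X W" "\<omega> \<in> W" "W \<subseteq> T"
    using T unfolding elementary_def nbhd_def by blast
  then have "openin X (H c ` W)" "\<omega> \<in> H c ` W" "H c ` W \<subseteq> H c ` T"
    using c H_openin by (auto simp: rev_image_eqI)
  then show "nbhd X \<omega> (H c ` T)"
    unfolding nbhd_def using H_image_subset[OF c T_space] by blast
qed

lemma elementary_closure:
  assumes T: "elementary E e ginv X H \<omega> T"
  shows "elementary E e ginv X H \<omega> (X closure_of T)"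
proof -
  have "T \<subseteq> X closure_of T"
    using T closure_of_subset unfolding elementary_def balanced_def by blast
  then show ?thesis
    using T balanced_closure closure_of_subset_topspace
    unfolding elementary_def nbhd_def by (metis closure_of_closure_of order_trans)
qed

text \<open>The sweep of \<open>W\<close> below the threshold \<open>\<alpha>\<close>: the union of the sets \<open>H (ginv \<epsilon>) ` W\<close>
  over all \<open>\<epsilon> \<le> \<alpha>\<close>. It is balanced because \<open>\<delta> \<le> e\<close> implies \<open>\<delta> \<epsilon> \<le> \<epsilon>\<close>.\<close>

definition sweep :: "real \<Rightarrow> 'a set \<Rightarrow> 'a set" where
  "sweep \<alpha> W = (\<Union>\<epsilon>\<in>{\<epsilon>\<in>E. \<epsilon> \<le> \<alpha>}. H (ginv \<epsilon>) ` W)"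

lemma sweep_balanced:
  assumes W: "W \<subseteq> topspace X"
  shows "balanced E e ginv X H (sweep \<alpha> W)"
  unfolding balanced_def
proof (intro conjI ballI impI)
  show "sweep \<alpha> W \<subseteq> topspace X" unfolding sweep_def using W by auto
  fix \<delta> assume \<delta>: "\<delta> \<in> E" "\<delta> \<le> e"
  show "H (ginv \<delta>) ` sweep \<alpha> W \<subseteq> sweep \<alpha> W"
  proof
    fix y assume "y \<in> H (ginv \<delta>) ` sweep \<alpha> W"
    then obtain \<epsilon> w where \<epsilon>: "\<epsilon> \<in> E" "\<epsilon> \<le> \<alpha>" and "w \<in> W"
      and y: "y = H (ginv \<delta>) (H (ginv \<epsilon>) w)"
      unfolding sweep_def by blast
    have "w \<in> topspace X" using \<open>w \<in> W\<close> W by blast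
    then have "y = H (ginv (mul \<delta> \<epsilon>)) w"
      using y \<delta>(1) \<epsilon>(1) by (simp add: H_mul inv_mul)
    then have "y \<in> H (ginv (mul \<delta> \<epsilon>)) ` W" using \<open>w \<in> W\<close> by blast
    moreover have "mul \<delta> \<epsilon> \<le> \<alpha>" using mul_le_of_le_unit[OF \<delta>(1) \<epsilon>(1) \<delta>(2)] \<epsilon>(2) by simp
    moreover have "mul \<delta> \<epsilon> \<in> E" using \<delta>(1) \<epsilon>(1) by simp
    ultimately show "y \<in> sweep \<alpha> W" unfolding sweep_def by blast
  qed
qed

lemma sweep_openin: "openin X W \<Longrightarrow> openin X (sweep \<alpha> W)"
  unfolding sweep_def by (intro openin_Union) (auto intro!: H_openin)

lemma center_in_sweep:
  assumes "\<alpha> \<in> E" "\<omega> \<in> W"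
  shows "\<omega> \<in> sweep \<alpha> W"
proof -
  have "H (ginv \<alpha>) \<omega> = \<omega>" using assms(1) by simp
  then have "\<omega> \<in> H (ginv \<alpha>) ` W" using assms(2) by (metis image_eqI)
  then show ?thesis unfolding sweep_def using assms(1) by blast
qed

text \<open>If \<open>X\<close> is locally compact, sweeping a small open neighbourhood of the center, which by
  (ABS) is eventually absorbed into a compact neighbourhood \<open>K\<close>, yields an open balanced
  neighbourhood contained in \<open>K\<close>, hence with compact closure.\<close>

lemma exists_open_elementary:
  assumes "locally_compact_space X"
  obtains T where "openin X T" "elementary E e ginv X H \<omega> T"
proof -
  obtain U K where UK: "openin X U" "compactin X K" "\<omega> \<in> U" "U \<subseteq> K"
    using assms center_in_space unfolding locally_compact_space_def by blast
  have "nbhd X \<omega> K" unfolding nbhd_def using UK compactin_subset_topspace by blast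
  then obtain U' where U': "nbhd X \<omega> U'" "eventually_absorbed E ginv H U' K"
    using absorptive_centerD[OF center _ center_in_space] by blast
  then obtain W where W: "openin X W" "\<omega> \<in> W" "W \<subseteq> U'"
    unfolding nbhd_def by blast
  then obtain \<alpha> where \<alpha>: "\<alpha> \<in> E"
    and absorbed: "\<forall>\<epsilon>\<in>E. \<epsilon> \<le> \<alpha> \<longrightarrow> H (ginv \<epsilon>) ` W \<subseteq> K"
    using eventually_absorbed_subset[OF U'(2)] unfolding eventually_absorbed_def by blast
  have open_T: "openin X (sweep \<alpha> W)" using W(1) by (rule sweep_openin)
  have "sweep \<alpha> W \<subseteq> K" unfolding sweep_def using absorbed by blast
  then have "X closure_of sweep \<alpha> W \<subseteq> K"
    using compactin_imp_closedin[OF Hausdorff UK(2)] by (rule closure_of_minimal)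
  then have "compactin X (X closure_of sweep \<alpha> W)"
    using closed_compactin[OF UK(2)] closedin_closure_of by blast
  moreover have "nbhd X \<omega> (sweep \<alpha> W)"
    unfolding nbhd_def using open_T openin_subset[OF open_T] center_in_sweep[OF \<alpha> W(2)]
    by blast
  moreover have "balanced E e ginv X H (sweep \<alpha> W)"
    using sweep_balanced[OF openin_subset[OF W(1)]] .
  ultimately show ?thesis
    using that open_T unfolding elementary_def by blast
qed

text \<open>A compact set eventually absorbed into \<open>V\<close> is mapped into \<open>V\<close> by \<open>H n\<close> for some positive
  integer \<open>n\<close>: choose \<open>n \<ge> ginv \<beta>\<close>, so that \<open>ginv n \<le> \<beta>\<close> as inversion is antitone.\<close>

lemma absorbed_by_integer:
  assumes nat_in_E: "\<And>n::nat. n \<ge> 1 \<Longrightarrow> real n \<in> E"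
    and absorbed: "eventually_absorbed E ginv H S V"
  obtains n :: nat where "n \<ge> 1" "H (real n) ` S \<subseteq> V"
proof -
  obtain \<beta> where \<beta>: "\<beta> \<in> E" "\<forall>\<epsilon>\<in>E. \<epsilon> \<le> \<beta> \<longrightarrow> H (ginv \<epsilon>) ` S \<subseteq> V"
    using absorbed unfolding eventually_absorbed_def by blast
  define n where "n = nat \<lceil>max 1 (ginv \<beta>)\<rceil>"
  have n: "n \<ge> 1" "ginv \<beta> \<le> real n" unfolding n_def by linarith+
  then have "ginv (real n) \<le> \<beta>"
    using inv_antitone[of "ginv \<beta>" "real n"] \<beta>(1) nat_in_E by simp
  then have "H (ginv (ginv (real n))) ` S \<subseteq> V"
    using \<beta>(2) inv_closed[OF nat_in_E[OF n(1)]] by blast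
  then show ?thesis using that n(1) nat_in_E[OF n(1)] by simp
qed

text \<open>Every elementary set is mapped into any given neighbourhood of the center by some
  \<open>H n\<close>, because its closure is compact and hence eventually absorbed.\<close>

lemma elementary_shrinks:
  assumes nat_in_E: "\<And>n::nat. n \<ge> 1 \<Longrightarrow> real n \<in> E"
    and T: "elementary E e ginv X H \<omega> T" and V: "nbhd X \<omega> V"
  obtains n :: nat where "n \<ge> 1" "H (real n) ` T \<subseteq> V"
proof -
  have "E \<noteq> {}" using unit_closed by blast
  moreover have "compactin X (X closure_of T)" using T unfolding elementary_def by blast
  ultimately have "eventually_absorbed E ginv H (X closure_of T) V"
    using compact_eventually_absorbed[OF center _ _ V] by blast
  moreover have "T \<subseteq> X closure_of T"
    using T closure_of_subset unfolding elementary_def balanced_def by blast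
  ultimately have "eventually_absorbed E ginv H T V"
    by (rule eventually_absorbed_subset)
  then show ?thesis using absorbed_by_integer[OF nat_in_E] that by blast
qed

lemma countable_elementary_base:
  assumes nat_in_E: "\<And>n::nat. n \<ge> 1 \<Longrightarrow> real n \<in> E"
    and T: "elementary E e ginv X H \<omega> T" and P: "\<And>c. c \<in> E \<Longrightarrow> P (H c ` T)"
  shows "\<exists>\<B>. countable \<B> \<and> (\<forall>S\<in>\<B>. elementary E e ginv X H \<omega> S \<and> P S) \<and>
           (\<forall>V. nbhd X \<omega> V \<longrightarrow> (\<exists>S\<in>\<B>. S \<subseteq> V))"
proof (intro exI conjI)
  let ?\<B> = "(\<lambda>n::nat. H (real n) ` T) ` {n. n \<ge> 1}"
  show "countable ?\<B>" by simp
  show "\<forall>S\<in>?\<B>. elementary E e ginv X H \<omega> S \<and> P S"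
  proof
    fix S assume "S \<in> ?\<B>"
    then obtain n :: nat where "n \<ge> 1" "S = H (real n) ` T" by blast
    then show "elementary E e ginv X H \<omega> S \<and> P S"
      using nat_in_E elementary_image[OF _ T] P by simp
  qed
  show "\<forall>V. nbhd X \<omega> V \<longrightarrow> (\<exists>S\<in>?\<B>. S \<subseteq> V)"
  proof (intro allI impI)
    fix V assume "nbhd X \<omega> V"
    then obtain n :: nat where "n \<ge> 1" "H (real n) ` T \<subseteq> V"
      using elementary_shrinks[OF nat_in_E T] by blast
    then show "\<exists>S\<in>?\<B>. S \<subseteq> V" by blast
  qed
qed

end

theorem corollary2p4:
  fixes E :: "real set" and mul :: "real \<Rightarrow> real \<Rightarrow> real" and e :: real
    and ginv :: "real \<Rightarrow> real" and X :: "'a topology" and H :: "real \<Rightarrow> 'a \<Rightarrow> 'a" and \<omega> :: 'a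
  assumes "R_group E mul e ginv"
    and "Hausdorff_space X" and "locally_compact_space X"
    and "\<exists>x\<in>topspace X. \<exists>y\<in>topspace X. x \<noteq> y"
    and "group_action E mul e X H" and "continuous_action E X H"
    and "absorptive_center E ginv X H \<omega>"
  shows "(\<exists>\<B>. countable \<B> \<and>
            (\<forall>T\<in>\<B>. elementary E e ginv X H \<omega> T \<and> compactin X T) \<and>
            (\<forall>V. nbhd X \<omega> V \<longrightarrow> (\<exists>T\<in>\<B>. T \<subseteq> V)))
       \<and> (\<exists>\<B>. countable \<B> \<and>
            (\<forall>T\<in>\<B>. elementary E e ginv X H \<omega> T \<and> openin X T) \<and>
            (\<forall>V. nbhd X \<omega> V \<longrightarrow> (\<exists>T\<in>\<B>. T \<subseteq> V)))"
proof -
  have group: "abelian_group_on E mul e ginv"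
    and nat_in_E: "\<And>n::nat. n \<ge> 1 \<Longrightarrow> real n \<in> E"
    and mono: "\<And>a b c. a \<in> E \<Longrightarrow> b \<in> E \<Longrightarrow> c \<in> E \<Longrightarrow> a \<le> b \<Longrightarrow> mul a c \<le> mul b c"
    using assms(1) unfolding R_group_def by auto
  interpret absorptive_action E mul e ginv X H \<omega>
    by unfold_locales (fact group mono assms(5) assms(6) assms(7) assms(2))+
  obtain T where T: "openin X T" "elementary E e ginv X H \<omega> T"
    using exists_open_elementary[OF assms(3)] .
  have K: "elementary E e ginv X H \<omega> (X closure_of T)"
    using elementary_closure[OF T(2)] .
  have "compactin X (X closure_of T)" using T(2) unfolding elementary_def by blast
  then have compact_images: "compactin X (H c ` (X closure_of T))" if "c \<in> E" for c
    using image_compactin H_continuous[OF that] by blast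
  have open_images: "openin X (H c ` T)" if "c \<in> E" for c
    using H_openin[OF that T(1)] .
  show ?thesis
    using countable_elementary_base[where P = "compactin X", OF nat_in_E K compact_images]
      countable_elementary_base[where P = "openin X", OF nat_in_E T(2) open_images]
    by (rule conjI)
qed

end
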